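(* Let $\gamma>0$ and let $\mathbf a$ be given by $a_0=0$ and $a_i=i^{-\gamma}$ for $i\ge 1$. Then $f^{\mathbf a}$ satisfies the density axiom, and $f^{\mathbf a}$ satisfies the size axiom if and only if $\gamma\le 1$.
   Context: Graphs are finite directed graphs; $d_G(x,y)$ is the shortest directed path length from $x$ to $y$ ($\infty$ if none). For $\mathbf a\in\mathbb{R}^{\mathbb{N}}$ the linear centrality is $f^{\mathbf a}_G(i)=\sum_{k\ge 0}|\{j: d_G(j,i)=k\}|\,a_k$ (only finite distances counted). For positive integers $k,p$: a $k$-clique has $k$ nodes with arcs in both directions between every pair of distinct nodes; a directed $p$-cycle has nodes $z_0,\dots,z_{p-1}$ with arcs $z_j\to z_{j+1\bmod p}$. Let $x$ be a clique node and $y$ a cycle node. $S$ is the disjoint union of the $k$-clique and the $p$-cycle; $S_{xy}$ is $S$ plus the arcs $x\to y$ and $y\to x$. Density axiom: for every $k\ge3$ and $p=k$, $f_{S_{xy}}(x)>f_{S_{xy}}(y)$. Size axiom: for every fixed $p$ there is $k_0$ with $f_S(x)>f_S(y)$ for all $k\ge k_0$, and for every fixed $k$ there is $p_0$ with $f_S(x)<f_S(y)$ for all $p\ge p_0$. *)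

theory Defs
  imports Complex_Main "HOL-Library.Extended_Nat"
begin

type_synonym 'v digraph = "'v set \<times> ('v \<times> 'v) set"

definition gdist :: "'v digraph \<Rightarrow> 'v \<Rightarrow> 'v \<Rightarrow> enat" where
  "gdist G x y = (if \<exists>n. (x, y) \<in> (snd G) ^^ n
                   then enat (LEAST n. (x, y) \<in> (snd G) ^^ n) else \<infinity>)"

definition lin_centrality :: "(nat \<Rightarrow> real) \<Rightarrow> 'v digraph \<Rightarrow> 'v \<Rightarrow> real" where
  "lin_centrality a G i = (\<Sum>k. real (card {j \<in> fst G. gdist G j i = enat k}) * a k)"

definition clique_nodes :: "nat \<Rightarrow> (nat + nat) set" where
  "clique_nodes k = Inl ` {..<k}"

definition cycle_nodes :: "nat \<Rightarrow> (nat + nat) set" where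
  "cycle_nodes p = Inr ` {..<p}"

definition clique_arcs :: "nat \<Rightarrow> ((nat + nat) \<times> (nat + nat)) set" where
  "clique_arcs k = {(Inl i, Inl j) | i j. i < k \<and> j < k \<and> i \<noteq> j}"

definition cycle_arcs :: "nat \<Rightarrow> ((nat + nat) \<times> (nat + nat)) set" where
  "cycle_arcs p = {(Inr j, Inr ((j + 1) mod p)) | j. j < p}"

definition graphS :: "nat \<Rightarrow> nat \<Rightarrow> (nat + nat) digraph" where
  "graphS k p = (clique_nodes k \<union> cycle_nodes p, clique_arcs k \<union> cycle_arcs p)"

definition graphSxy :: "nat \<Rightarrow> nat \<Rightarrow> (nat + nat) \<Rightarrow> (nat + nat) \<Rightarrow> (nat + nat) digraph" where
  "graphSxy k p x y = (fst (graphS k p), snd (graphS k p) \<union> {(x, y), (y, x)})"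

type_synonym centrality = "(nat + nat) digraph \<Rightarrow> (nat + nat) \<Rightarrow> real"

definition density_axiom :: "centrality \<Rightarrow> bool" where
  "density_axiom f \<longleftrightarrow>
     (\<forall>k::nat. k \<ge> 3 \<longrightarrow> (\<forall>x \<in> clique_nodes k. \<forall>y \<in> cycle_nodes k.
        f (graphSxy k k x y) x > f (graphSxy k k x y) y))"

definition size_axiom :: "centrality \<Rightarrow> bool" where
  "size_axiom f \<longleftrightarrow>
     (\<forall>p::nat. p > 0 \<longrightarrow> (\<exists>k0. \<forall>k \<ge> k0. \<forall>x \<in> clique_nodes k. \<forall>y \<in> cycle_nodes p.
        f (graphS k p) x > f (graphS k p) y)) \<and>
     (\<forall>k::nat. k > 0 \<longrightarrow> (\<exists>p0. \<forall>p \<ge> p0. \<forall>x \<in> clique_nodes k. \<forall>y \<in> cycle_nodes p.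
        f (graphS k p) x < f (graphS k p) y))"

definition powseq :: "real \<Rightarrow> nat \<Rightarrow> real" where
  "powseq \<gamma> i = (if i = 0 then 0 else real i powr (- \<gamma>))"

end

theory Submission
  imports Defs "HOL-Analysis.Summation_Tests"
begin

text \<open>
  All distances in \<open>S\<close> and \<open>S\<^sub>x\<^sub>y\<close> are explicit, so the centralities are too. In \<open>S\<close> a clique node
  scores \<open>a\<^sub>0 + (k - 1) a\<^sub>1\<close> and a cycle node the partial sum \<open>a\<^sub>0 + \<dots> + a\<^sub>p\<^sub>-\<^sub>1\<close>, so for nonnegative
  \<open>a\<close> with \<open>a\<^sub>1 > 0\<close> the size axiom says exactly that \<open>\<Sum> a\<^sub>i\<close> diverges, i.e. \<open>\<gamma> \<le> 1\<close>.
  In \<open>S\<^sub>x\<^sub>y\<close> with \<open>p = k\<close> the difference \<open>f(x) - f(y)\<close> telescopes to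
  \<open>(k - 1)(a\<^sub>1 - a\<^sub>2) + a\<^sub>k - a\<^sub>1\<close>, which for \<open>a\<^sub>i = i\<^sup>-\<^sup>\<gamma>\<close> is positive by Bernoulli's inequality
  \<open>(2\<^sup>-\<^sup>\<gamma>)\<^sup>k\<^sup>-\<^sup>1 \<ge> 1 - (k - 1)(1 - 2\<^sup>-\<^sup>\<gamma>)\<close> together with \<open>k < 2\<^sup>k\<^sup>-\<^sup>1\<close>.
\<close>

lemma potential_le_of_relpow:
  fixes h :: "'v \<Rightarrow> enat"
  assumes "h t = 0" and arc: "\<And>u w. (u, w) \<in> E \<Longrightarrow> h u \<le> h w + 1"
  shows "(u, t) \<in> E ^^ n \<Longrightarrow> h u \<le> enat n"
proof (induction n arbitrary: u)
  case 0
  then show ?case using \<open>h t = 0\<close> by simp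
next
  case (Suc n)
  then obtain w where "(u, w) \<in> E" "(w, t) \<in> E ^^ n" by (meson relpow_Suc_D2)
  then have "h u \<le> h w + 1" "h w \<le> enat n" using arc Suc.IH by auto
  then have "h u \<le> enat n + 1" by (meson add_right_mono order_trans)
  then show ?case by (simp add: one_enat_def)
qed

lemma relpow_of_potential:
  fixes h :: "'v \<Rightarrow> enat"
  assumes zero: "\<And>u. h u = 0 \<Longrightarrow> u = t"
    and descend: "\<And>u d. h u = enat (Suc d) \<Longrightarrow> \<exists>w. (u, w) \<in> E \<and> h w = enat d"
  shows "h u = enat d \<Longrightarrow> (u, t) \<in> E ^^ d"
proof (induction d arbitrary: u)
  case 0
  then show ?case using zero by (simp add: zero_enat_def[symmetric])
next
  case (Suc d)
  then obtain w where "(u, w) \<in> E" "h w = enat d" using descend by blast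
  then show ?case using Suc.IH by (meson relpow_Suc_I2)
qed

lemma gdist_eq_potential:
  fixes h :: "'v \<Rightarrow> enat"
  assumes "h t = 0" and "\<And>u w. (u, w) \<in> E \<Longrightarrow> h u \<le> h w + 1"
    and "\<And>u. h u = 0 \<Longrightarrow> u = t"
    and "\<And>u d. h u = enat (Suc d) \<Longrightarrow> \<exists>w. (u, w) \<in> E \<and> h w = enat d"
  shows "gdist (V, E) u t = h u"
proof (cases "h u")
  case (enat d)
  have path: "(u, t) \<in> E ^^ d" using relpow_of_potential[OF assms(3,4)] enat by blast
  have "d \<le> n" if "(u, t) \<in> E ^^ n" for n
    using potential_le_of_relpow[of h t E, OF assms(1,2) that] enat by simp
  then have "(LEAST n. (u, t) \<in> E ^^ n) = d" using path by (intro Least_equality) auto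
  then show ?thesis unfolding gdist_def using path enat by auto
next
  case infinity
  then have "(u, t) \<notin> E ^^ n" for n using potential_le_of_relpow[of h t E, OF assms(1,2)] by force
  then show ?thesis unfolding gdist_def using infinity by simp
qed

lemma lin_centrality_eq_sum_nodes:
  assumes "finite V"
  shows "lin_centrality a (V, E) t = (\<Sum>u\<in>V. case gdist (V, E) u t of enat d \<Rightarrow> a d | \<infinity> \<Rightarrow> 0)"
proof -
  let ?D = "\<lambda>u. gdist (V, E) u t"
  have card_eq: "real (card {u \<in> V. ?D u = enat k}) * a k = (\<Sum>u\<in>V. if ?D u = enat k then a k else 0)"
    for k using sum.inter_filter[OF assms, of "\<lambda>_. a k"] by simp
  have single: "(\<lambda>k. if ?D u = enat k then a k else 0) sums (case ?D u of enat d \<Rightarrow> a d | \<infinity> \<Rightarrow> 0)"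
    for u
  proof (cases "?D u")
    case (enat d)
    then have "(\<lambda>k. if ?D u = enat k then a k else 0) = (\<lambda>k. if k = d then a k else 0)" by auto
    then show ?thesis using enat sums_single[of d a] by simp
  qed simp
  show ?thesis
    unfolding lin_centrality_def fst_conv card_eq
    by (simp add: suminf_sum[OF sums_summable[OF single]] sums_unique[OF single, symmetric])
qed

lemma lin_centrality_eq_sum_potential:
  fixes h :: "'v \<Rightarrow> enat"
  assumes "finite V" and "h t = 0" and "\<And>u w. (u, w) \<in> E \<Longrightarrow> h u \<le> h w + 1"
    and "\<And>u. h u = 0 \<Longrightarrow> u = t"
    and "\<And>u d. h u = enat (Suc d) \<Longrightarrow> \<exists>w. (u, w) \<in> E \<and> h w = enat d"
  shows "lin_centrality a (V, E) t = (\<Sum>u\<in>V. case h u of enat d \<Rightarrow> a d | \<infinity> \<Rightarrow> 0)"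
  using lin_centrality_eq_sum_nodes[OF assms(1)] gdist_eq_potential[of h t E, OF assms(2-5)]
  by simp

lemma finite_graph_nodes: "finite (clique_nodes k \<union> cycle_nodes p)"
  by (simp add: clique_nodes_def cycle_nodes_def)

lemma sum_graph_nodes:
  "(\<Sum>u\<in>clique_nodes k \<union> cycle_nodes p. F u) = (\<Sum>j<k. F (Inl j)) + (\<Sum>j<p. F (Inr j))"
  unfolding clique_nodes_def cycle_nodes_def
  by (subst sum.union_disjoint) (auto simp: sum.reindex)

lemma sum_lessThan_if_eq:
  "(a::nat) < k \<Longrightarrow> (\<Sum>j<k. if j = a then u else v) = u + (real k - 1) * (v::real)"
proof -
  assume "a < k"
  then have "(\<Sum>j<k. if j = a then u else v) = (\<Sum>j<k. v + (if j = a then u - v else 0))"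
    by (intro sum.cong) auto
  also have "\<dots> = real k * v + (u - v)" using \<open>a < k\<close> by (simp add: sum.distrib)
  finally show ?thesis by (simp add: algebra_simps)
qed

text \<open>Number of arcs on the walk from \<open>z\<^sub>j\<close> forward to \<open>z\<^sub>b\<close> in the \<open>p\<close>-cycle.\<close>
definition cycle_dist :: "nat \<Rightarrow> nat \<Rightarrow> nat \<Rightarrow> nat" where
  "cycle_dist p b j = (if j \<le> b then b - j else b + p - j)"

lemma cycle_dist_eq_0_iff: "b < p \<Longrightarrow> j < p \<Longrightarrow> cycle_dist p b j = 0 \<longleftrightarrow> j = b"
  by (auto simp: cycle_dist_def)

lemma cycle_dist_le_succ: "b < p \<Longrightarrow> j < p \<Longrightarrow> cycle_dist p b j \<le> cycle_dist p b ((j + 1) mod p) + 1"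
  by (cases "Suc j = p") (auto simp: mod_Suc cycle_dist_def)

lemma cycle_dist_succ:
  "b < p \<Longrightarrow> j < p \<Longrightarrow> cycle_dist p b j = Suc d \<Longrightarrow> cycle_dist p b ((j + 1) mod p) = d"
  by (cases "Suc j = p") (auto simp: mod_Suc cycle_dist_def split: if_splits)

lemma sum_cycle_dist: "b < p \<Longrightarrow> (\<Sum>j<p. F (cycle_dist p b j)) = (\<Sum>d<p. F d)"
  by (rule sum.reindex_bij_witness[where i = "cycle_dist p b" and j = "cycle_dist p b"])
    (auto simp: cycle_dist_def)

lemma lin_centrality_graphS_clique:
  assumes a: "a < k"
  shows "lin_centrality c (graphS k p) (Inl a) = c 0 + (real k - 1) * c 1"
proof -
  define h :: "nat + nat \<Rightarrow> enat" where
    "h u = (case u of Inl j \<Rightarrow> if j < k then (if j = a then enat 0 else enat 1) else \<infinity>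
                    | Inr j \<Rightarrow> \<infinity>)" for u
  have "lin_centrality c (graphS k p) (Inl a)
      = (\<Sum>u\<in>clique_nodes k \<union> cycle_nodes p. case h u of enat d \<Rightarrow> c d | \<infinity> \<Rightarrow> 0)"
    unfolding graphS_def
  proof (rule lin_centrality_eq_sum_potential[OF finite_graph_nodes])
    show "h (Inl a) = 0" using a by (simp add: h_def zero_enat_def)
    show "h u \<le> h w + 1" if "(u, w) \<in> clique_arcs k \<union> cycle_arcs p" for u w
      using that by (auto simp: h_def clique_arcs_def cycle_arcs_def one_enat_def)
    show "u = Inl a" if "h u = 0" for u
      using that by (auto simp: h_def zero_enat_def split: sum.splits if_splits)
    show "\<exists>w. (u, w) \<in> clique_arcs k \<union> cycle_arcs p \<and> h w = enat d" if "h u = enat (Suc d)" for u d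
      using that a by (auto simp: h_def clique_arcs_def split: sum.splits if_splits)
  qed
  also have "\<dots> = (\<Sum>j<k. if j = a then c 0 else c 1)"
    by (auto simp: sum_graph_nodes h_def intro!: sum.cong)
  finally show ?thesis using sum_lessThan_if_eq[OF a] by simp
qed

lemma lin_centrality_graphS_cycle:
  assumes b: "b < p"
  shows "lin_centrality c (graphS k p) (Inr b) = (\<Sum>d<p. c d)"
proof -
  define h :: "nat + nat \<Rightarrow> enat" where
    "h u = (case u of Inl j \<Rightarrow> \<infinity>
                    | Inr j \<Rightarrow> if j < p then enat (cycle_dist p b j) else \<infinity>)" for u
  have "lin_centrality c (graphS k p) (Inr b)
      = (\<Sum>u\<in>clique_nodes k \<union> cycle_nodes p. case h u of enat d \<Rightarrow> c d | \<infinity> \<Rightarrow> 0)"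
    unfolding graphS_def
  proof (rule lin_centrality_eq_sum_potential[OF finite_graph_nodes])
    show "h (Inr b) = 0" using b by (simp add: h_def zero_enat_def cycle_dist_def)
    show "h u \<le> h w + 1" if "(u, w) \<in> clique_arcs k \<union> cycle_arcs p" for u w
      using that cycle_dist_le_succ[OF b]
      by (auto simp: h_def clique_arcs_def cycle_arcs_def one_enat_def)
    show "u = Inr b" if "h u = 0" for u
      using that cycle_dist_eq_0_iff[OF b] by (auto simp: h_def zero_enat_def split: sum.splits if_splits)
    show "\<exists>w. (u, w) \<in> clique_arcs k \<union> cycle_arcs p \<and> h w = enat d" if hu: "h u = enat (Suc d)" for u d
    proof -
      obtain j where j: "u = Inr j" "j < p" "cycle_dist p b j = Suc d"
        using hu by (cases u) (auto simp: h_def split: if_splits)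
      then show ?thesis using cycle_dist_succ[OF b]
        by (intro exI[of _ "Inr ((j + 1) mod p)"]) (auto simp: h_def cycle_arcs_def)
    qed
  qed
  also have "\<dots> = (\<Sum>j<p. c (cycle_dist p b j))"
    by (simp add: sum_graph_nodes h_def)
  finally show ?thesis using sum_cycle_dist[OF b] by simp
qed

lemma lin_centrality_graphSxy_clique:
  assumes a: "a < k" and b: "b < k"
  shows "lin_centrality c (graphSxy k k (Inl a) (Inr b)) (Inl a)
       = c 0 + (real k - 1) * c 1 + (\<Sum>d<k. c (Suc d))"
proof -
  define h :: "nat + nat \<Rightarrow> enat" where
    "h u = (case u of Inl j \<Rightarrow> if j < k then (if j = a then enat 0 else enat 1) else \<infinity>
                    | Inr j \<Rightarrow> if j < k then enat (Suc (cycle_dist k b j)) else \<infinity>)" for u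
  let ?E = "clique_arcs k \<union> cycle_arcs k \<union> {(Inl a, Inr b), (Inr b, Inl a)}"
  have "lin_centrality c (graphSxy k k (Inl a) (Inr b)) (Inl a)
      = (\<Sum>u\<in>clique_nodes k \<union> cycle_nodes k. case h u of enat d \<Rightarrow> c d | \<infinity> \<Rightarrow> 0)"
    unfolding graphSxy_def graphS_def fst_conv snd_conv
  proof (rule lin_centrality_eq_sum_potential[OF finite_graph_nodes])
    show "h (Inl a) = 0" using a by (simp add: h_def zero_enat_def)
    show "h u \<le> h w + 1" if "(u, w) \<in> ?E" for u w
      using that a b cycle_dist_le_succ[OF b] cycle_dist_eq_0_iff[OF b]
      by (auto simp: h_def clique_arcs_def cycle_arcs_def one_enat_def)
    show "u = Inl a" if "h u = 0" for u
      using that by (auto simp: h_def zero_enat_def split: sum.splits if_splits)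
    show "\<exists>w. (u, w) \<in> ?E \<and> h w = enat d" if hu: "h u = enat (Suc d)" for u d
    proof (cases u)
      case (Inl j)
      then have "j < k" "j \<noteq> a" "d = 0" using hu by (auto simp: h_def zero_enat_def split: if_splits)
      then show ?thesis using Inl a by (intro exI[of _ "Inl a"]) (auto simp: h_def clique_arcs_def)
    next
      case (Inr j)
      then have j: "j < k" "cycle_dist k b j = d" using hu by (auto simp: h_def split: if_splits)
      show ?thesis
      proof (cases d)
        case 0
        then have "j = b" using j cycle_dist_eq_0_iff[OF b] by auto
        then show ?thesis using Inr a 0 by (intro exI[of _ "Inl a"]) (auto simp: h_def)
      next
        case (Suc d')
        then show ?thesis using Inr j cycle_dist_succ[OF b]
          by (intro exI[of _ "Inr ((j + 1) mod k)"]) (auto simp: h_def cycle_arcs_def)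
      qed
    qed
  qed
  also have "\<dots> = (\<Sum>j<k. if j = a then c 0 else c 1) + (\<Sum>j<k. c (Suc (cycle_dist k b j)))"
    by (auto simp: sum_graph_nodes h_def intro!: sum.cong)
  finally show ?thesis using sum_lessThan_if_eq[OF a] sum_cycle_dist[OF b] by simp
qed

lemma lin_centrality_graphSxy_cycle:
  assumes a: "a < k" and b: "b < k"
  shows "lin_centrality c (graphSxy k k (Inl a) (Inr b)) (Inr b)
       = c 1 + (real k - 1) * c 2 + (\<Sum>d<k. c d)"
proof -
  define h :: "nat + nat \<Rightarrow> enat" where
    "h u = (case u of Inl j \<Rightarrow> if j < k then (if j = a then enat 1 else enat 2) else \<infinity>
                    | Inr j \<Rightarrow> if j < k then enat (cycle_dist k b j) else \<infinity>)" for u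
  let ?E = "clique_arcs k \<union> cycle_arcs k \<union> {(Inl a, Inr b), (Inr b, Inl a)}"
  have "lin_centrality c (graphSxy k k (Inl a) (Inr b)) (Inr b)
      = (\<Sum>u\<in>clique_nodes k \<union> cycle_nodes k. case h u of enat d \<Rightarrow> c d | \<infinity> \<Rightarrow> 0)"
    unfolding graphSxy_def graphS_def fst_conv snd_conv
  proof (rule lin_centrality_eq_sum_potential[OF finite_graph_nodes])
    show "h (Inr b) = 0" using b by (simp add: h_def zero_enat_def cycle_dist_def)
    show "h u \<le> h w + 1" if "(u, w) \<in> ?E" for u w
      using that a b cycle_dist_le_succ[OF b]
      by (auto simp: h_def clique_arcs_def cycle_arcs_def one_enat_def cycle_dist_def)
    show "u = Inr b" if "h u = 0" for u
      using that cycle_dist_eq_0_iff[OF b] by (auto simp: h_def zero_enat_def split: sum.splits if_splits)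
    show "\<exists>w. (u, w) \<in> ?E \<and> h w = enat d" if hu: "h u = enat (Suc d)" for u d
    proof (cases u)
      case (Inl j)
      show ?thesis
      proof (cases "j = a")
        case True
        then have "d = 0" using hu Inl by (auto simp: h_def split: if_splits)
        then show ?thesis using Inl True b
          by (intro exI[of _ "Inr b"]) (auto simp: h_def cycle_dist_def)
      next
        case False
        then have "j < k" "d = 1" using hu Inl by (auto simp: h_def split: if_splits)
        then show ?thesis using Inl False a
          by (intro exI[of _ "Inl a"]) (auto simp: h_def clique_arcs_def)
      qed
    next
      case (Inr j)
      then have "j < k" "cycle_dist k b j = Suc d" using hu by (auto simp: h_def split: if_splits)
      then show ?thesis using Inr cycle_dist_succ[OF b]
        by (intro exI[of _ "Inr ((j + 1) mod k)"]) (auto simp: h_def cycle_arcs_def)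
    qed
  qed
  also have "\<dots> = (\<Sum>j<k. if j = a then c 1 else c 2) + (\<Sum>j<k. c (cycle_dist k b j))"
    by (auto simp: sum_graph_nodes h_def intro!: sum.cong)
  finally show ?thesis using sum_lessThan_if_eq[OF a] sum_cycle_dist[OF b] by simp
qed

lemma density_axiom_lin_centralityI:
  assumes "\<And>k. 3 \<le> k \<Longrightarrow> c 1 < (real k - 1) * (c 1 - c 2) + c k"
  shows "density_axiom (lin_centrality c)"
  unfolding density_axiom_def
proof (intro allI impI ballI)
  fix k x y
  assume k: "3 \<le> k" and "x \<in> clique_nodes k" "y \<in> cycle_nodes k"
  then obtain a b where ab: "x = Inl a" "a < k" "y = Inr b" "b < k"
    by (auto simp: clique_nodes_def cycle_nodes_def)
  have "(\<Sum>d<k. c (Suc d)) - (\<Sum>d<k. c d) = c k - c 0"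
    using sum_lessThan_telescope[of c k] by (simp add: sum_subtractf)
  then show "lin_centrality c (graphSxy k k x y) y < lin_centrality c (graphSxy k k x y) x"
    using assms[OF k] ab
    by (simp add: lin_centrality_graphSxy_clique lin_centrality_graphSxy_cycle algebra_simps)
qed

lemma not_summable_iff_partial_sums_unbounded:
  fixes c :: "nat \<Rightarrow> real"
  assumes "\<And>n. 0 \<le> c n"
  shows "\<not> summable c \<longleftrightarrow> (\<forall>B. \<exists>n. B < (\<Sum>i<n. c i))"
proof
  assume "\<not> summable c"
  then show "\<forall>B. \<exists>n. B < (\<Sum>i<n. c i)"
    using summableI_nonneg_bounded[of c] assms by (meson not_le)
next
  assume "\<forall>B. \<exists>n. B < (\<Sum>i<n. c i)"
  then show "\<not> summable c"
    using sum_le_suminf[of c "{..<_}"] assms by (meson finite_lessThan not_le)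
qed

lemma partial_sums_unbounded_if_size_axiom:
  fixes c :: "nat \<Rightarrow> real"
  assumes nonneg: "\<And>n. 0 \<le> c n" and c1: "0 < c 1" and size: "size_axiom (lin_centrality c)"
  shows "\<exists>n. B < (\<Sum>i<n. c i)"
proof -
  obtain k :: nat where k: "max 0 (B / c 1) + 1 \<le> real k"
    by (metis real_arch_simple add.commute)
  then have "0 < k" by linarith
  then obtain p0 where p0: "\<forall>p \<ge> p0. \<forall>x \<in> clique_nodes k. \<forall>y \<in> cycle_nodes p.
      lin_centrality c (graphS k p) x < lin_centrality c (graphS k p) y"
    using size unfolding size_axiom_def by blast
  have "Inl 0 \<in> clique_nodes k" "Inr 0 \<in> cycle_nodes (Suc p0)"
    using \<open>0 < k\<close> by (auto simp: clique_nodes_def cycle_nodes_def)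
  then have "lin_centrality c (graphS k (Suc p0)) (Inl 0) < lin_centrality c (graphS k (Suc p0)) (Inr 0)"
    using p0[rule_format, of "Suc p0"] by simp
  then have clique_lt: "c 0 + (real k - 1) * c 1 < (\<Sum>i<Suc p0. c i)"
    using \<open>0 < k\<close> by (simp add: lin_centrality_graphS_clique lin_centrality_graphS_cycle)
  have "B / c 1 \<le> real k - 1" using k by linarith
  then have "B \<le> (real k - 1) * c 1" using c1 by (simp add: pos_divide_le_eq)
  then show ?thesis using clique_lt nonneg[of 0] by (intro exI[of _ "Suc p0"]) linarith
qed

lemma size_axiom_if_partial_sums_unbounded:
  fixes c :: "nat \<Rightarrow> real"
  assumes nonneg: "\<And>n. 0 \<le> c n" and c1: "0 < c 1"
    and unbounded: "\<And>B. \<exists>n. B < (\<Sum>i<n. c i)"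
  shows "size_axiom (lin_centrality c)"
proof -
  have "\<exists>k0. \<forall>k \<ge> k0. \<forall>x \<in> clique_nodes k. \<forall>y \<in> cycle_nodes p.
          lin_centrality c (graphS k p) y < lin_centrality c (graphS k p) x" for p
  proof -
    obtain k0 :: nat where k0: "(\<Sum>i<p. c i) / c 1 + 2 \<le> real k0"
      by (metis real_arch_simple add.commute)
    show ?thesis
    proof (intro exI[of _ k0] allI impI ballI)
      fix k x y
      assume "k0 \<le> k" "x \<in> clique_nodes k" "y \<in> cycle_nodes p"
      then obtain a b where ab: "x = Inl a" "a < k" "y = Inr b" "b < p"
        by (auto simp: clique_nodes_def cycle_nodes_def)
      have "(\<Sum>i<p. c i) < (real k0 - 1) * c 1" using k0 c1 by (simp add: field_simps)
      also have "\<dots> \<le> c 0 + (real k - 1) * c 1"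
        using \<open>k0 \<le> k\<close> c1 nonneg[of 0] by (simp add: mult_right_mono add_increasing)
      finally show "lin_centrality c (graphS k p) y < lin_centrality c (graphS k p) x"
        using ab by (simp add: lin_centrality_graphS_clique lin_centrality_graphS_cycle)
    qed
  qed
  moreover have "\<exists>p0. \<forall>p \<ge> p0. \<forall>x \<in> clique_nodes k. \<forall>y \<in> cycle_nodes p.
          lin_centrality c (graphS k p) x < lin_centrality c (graphS k p) y" for k
  proof -
    obtain p0 where p0: "c 0 + (real k - 1) * c 1 < (\<Sum>i<p0. c i)" using unbounded by blast
    show ?thesis
    proof (intro exI[of _ p0] allI impI ballI)
      fix p x y
      assume "p0 \<le> p" "x \<in> clique_nodes k" "y \<in> cycle_nodes p"
      then obtain a b where ab: "x = Inl a" "a < k" "y = Inr b" "b < p"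
        by (auto simp: clique_nodes_def cycle_nodes_def)
      have "(\<Sum>i<p0. c i) \<le> (\<Sum>i<p. c i)"
        using \<open>p0 \<le> p\<close> nonneg by (intro sum_mono2) auto
      then show "lin_centrality c (graphS k p) x < lin_centrality c (graphS k p) y"
        using ab p0 by (simp add: lin_centrality_graphS_clique lin_centrality_graphS_cycle)
    qed
  qed
  ultimately show ?thesis unfolding size_axiom_def by blast
qed

lemma size_axiom_lin_centrality_iff:
  fixes c :: "nat \<Rightarrow> real"
  assumes "\<And>n. 0 \<le> c n" and "0 < c 1"
  shows "size_axiom (lin_centrality c) \<longleftrightarrow> \<not> summable c"
  unfolding not_summable_iff_partial_sums_unbounded[OF assms(1)]
  using partial_sums_unbounded_if_size_axiom[of c, OF assms] size_axiom_if_partial_sums_unbounded[of c, OF assms]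
  by blast

lemma powseq_nonneg: "0 \<le> powseq \<gamma> n"
  by (simp add: powseq_def)

lemma summable_powseq_iff: "summable (powseq \<gamma>) \<longleftrightarrow> 1 < \<gamma>"
proof -
  have "powseq \<gamma> = (\<lambda>n. real n powr - \<gamma>)"
    by (auto simp: powseq_def)
  then show ?thesis by (simp add: summable_real_powr_iff)
qed

lemma real_less_two_power: "3 \<le> k \<Longrightarrow> real k < 2 ^ (k - 1)"
proof (induction k rule: dec_induct)
  case (step n)
  then have "real (Suc n) < 2 ^ (n - 1) + 2 ^ (n - 1)"
    by (smt (verit) of_nat_Suc one_le_power)
  also have "\<dots> = 2 ^ (Suc n - 1)" using step(1) by (cases n) auto
  finally show ?case .
qed simp

lemma powseq_density_bound:
  assumes "0 < \<gamma>" and k: "3 \<le> k"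
  shows "powseq \<gamma> 1 < (real k - 1) * (powseq \<gamma> 1 - powseq \<gamma> 2) + powseq \<gamma> k"
proof -
  define q where "q = 2 powr - \<gamma>"
  have "(2 ^ (k - 1)) powr - \<gamma> < real k powr - \<gamma>"
    using real_less_two_power[OF k] assms by (intro powr_less_mono2_neg) auto
  moreover have "(2 ^ (k - 1)) powr - \<gamma> = q ^ (k - 1)"
    unfolding q_def by (simp add: powr_realpow[symmetric] powr_powr mult.commute)
  ultimately have "q ^ (k - 1) < real k powr - \<gamma>" by simp
  moreover have "1 + real (k - 1) * (q - 1) \<le> (1 + (q - 1)) ^ (k - 1)"
    by (rule Bernoulli_inequality) (simp add: q_def)
  ultimately show ?thesis
    using k by (simp add: powseq_def q_def of_nat_diff algebra_simps)
qed

theorem corollary1: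
  fixes \<gamma> :: real
  assumes "\<gamma> > 0"
  shows "density_axiom (lin_centrality (powseq \<gamma>)) \<and>
         (size_axiom (lin_centrality (powseq \<gamma>)) \<longleftrightarrow> \<gamma> \<le> 1)"
proof
  show "density_axiom (lin_centrality (powseq \<gamma>))"
    by (rule density_axiom_lin_centralityI) (rule powseq_density_bound[OF assms])
  have "size_axiom (lin_centrality (powseq \<gamma>)) \<longleftrightarrow> \<not> summable (powseq \<gamma>)"
    by (rule size_axiom_lin_centrality_iff) (simp_all add: powseq_nonneg powseq_def)
  then show "size_axiom (lin_centrality (powseq \<gamma>)) \<longleftrightarrow> \<gamma> \<le> 1"
    by (simp add: summable_powseq_iff not_less)
qed

end
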